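(* Let $\varphi=\nu\tilde n.\sigma$ be an extended well-formed frame with respect to $\mathtt{s}\in\tilde n$ such that $\varphi\nvdash\mathtt{s}$. Let $U$, $V$ and $M$ be terms public with respect to $\varphi$, with all variables of $U$ and $V$ in $\mathrm{dom}(\sigma)$ and $M$ ground. Let $W,W'$ be subterms of terms in $\mathrm{ran}(\sigma)$ such that for every occurrence $q_{\mathtt{s}}$ of $\mathtt{s}$ in $W$ (respectively $W'$) there is an encryption occurrence $q_{\mathsf{enc}}$ in $W$ (respectively $W'$) with $q_{\mathsf{enc}}<q_{\mathtt{s}}$. Then (1) $U\sigma[\mathtt{s}/M]=V\sigma[\mathtt{s}/M]$ implies $U\sigma=V\sigma$; (2) $U\sigma[\mathtt{s}/M]=W[\mathtt{s}/M]$ implies $U\sigma=W$; (3) $W[\mathtt{s}/M]=W'[\mathtt{s}/M]$ implies $W=W'$ (all equalities syntactic).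
   Context: Terms over $\Sigma=\{\mathsf{enc}/3,\mathsf{dec}/2,\mathsf{enca}/3,\mathsf{deca}/2,\mathsf{pub}/1,\mathsf{priv}/1,\langle\cdot,\cdot\rangle/2,\pi_1/1,\pi_2/1,\mathsf{sign}/2,\mathsf{check}/3,\mathsf{retrieve}/1\}$, constants, names and variables. Equational theory $E$: $\pi_i(\langle z_1,z_2\rangle)=z_i$, $\mathsf{dec}(\mathsf{enc}(z_1,z_2,z_3),z_2)=z_1$, $\mathsf{deca}(\mathsf{enca}(z_1,\mathsf{pub}(z_2),z_3),\mathsf{priv}(z_2))=z_1$, $\mathsf{check}(z_1,\mathsf{sign}(z_1,\mathsf{priv}(z_2)),\mathsf{pub}(z_2))=\mathsf{ok}$, $\mathsf{retrieve}(\mathsf{sign}(z_1,z_2))=z_1$; left-to-right orientation is convergent, giving normal forms. Positions: sequences of positive integers, prefix order $\le$ ($<$ strict), $T|_p$ subterm, $\mathrm{head}(T)$ root symbol; $T[\mathtt{s}/M]$ replaces each occurrence of $\mathtt{s}$ by $M$. Frame $\varphi=\nu\tilde n.\sigma$: restricted names $\tilde n$, acyclic substitution $\sigma$. Public term w.r.t. $\varphi$: no name of $\tilde n$, no $\mathsf{priv}$. $\varphi\vdash M$: least relation containing $x\sigma$ ($x\in\mathrm{dom}(\sigma)$) and names outside $\tilde n$, closed under symbols other than $\mathsf{priv}$ and under $=_E$. An encryption occurrence $q$ in $U$ (head of $U|_q$ in $\{\mathsf{enc},\mathsf{enca}\}$) is an agent encryption w.r.t. names $\tilde m$ if $U|_{q\cdot3}\in\tilde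 m$, a probabilistic encryption w.r.t. a set of terms $S$ if for all $V\in S$ and $p$ with $V|_p=U|_{q\cdot3}$, $p=q'\cdot3$ with $V|_{q'}=U|_q$, and plaintext-above a position $q_T$ if $q\cdot1\le q_T$. Extended well-formed w.r.t. $\mathtt{s}$: (1) all terms of $\sigma$ are in normal form; (2) every agent encryption w.r.t. $\tilde n$ in $\sigma$ is probabilistic w.r.t. $\mathrm{ran}(\sigma)$; (3) for every occurrence $q_{\mathtt{s}}$ of $\mathtt{s}$ in $y\sigma$, $y\in\mathrm{dom}(\sigma)$, some agent encryption w.r.t. $\tilde n\setminus\{\mathtt{s}\}$ is plaintext-above $q_{\mathtt{s}}$; (4) the lowest such encryption $q_0$ satisfies $\mathrm{head}(y\sigma|_q)\in\{\langle\rangle,\mathsf{sign}\}$ for all $q_0<q<q_{\mathtt{s}}$. *)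

theory Defs
  imports Main "HOL-Library.Sublist"
begin

datatype fsym = Enc | Dec | Enca | Deca | Pub | Priv | Pair | Proj1 | Proj2
  | Sign | Check | Retrieve

datatype trm = Var string | Name string | Const string | Fun fsym "trm list"

fun arity :: "fsym \<Rightarrow> nat" where
  "arity Enc = 3" | "arity Dec = 2" | "arity Enca = 3" | "arity Deca = 2"
| "arity Pub = 1" | "arity Priv = 1" | "arity Pair = 2" | "arity Proj1 = 1"
| "arity Proj2 = 1" | "arity Sign = 2" | "arity Check = 3" | "arity Retrieve = 1"

fun wf_trm :: "trm \<Rightarrow> bool" where
  "wf_trm (Fun f ts) = (length ts = arity f \<and> (\<forall>t\<in>set ts. wf_trm t))"
| "wf_trm _ = True"

fun vars_trm :: "trm \<Rightarrow> string set" where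
  "vars_trm (Var x) = {x}"
| "vars_trm (Fun f ts) = (\<Union>t\<in>set ts. vars_trm t)"
| "vars_trm _ = {}"

fun names_trm :: "trm \<Rightarrow> string set" where
  "names_trm (Name n) = {n}"
| "names_trm (Fun f ts) = (\<Union>t\<in>set ts. names_trm t)"
| "names_trm _ = {}"

fun syms_trm :: "trm \<Rightarrow> fsym set" where
  "syms_trm (Fun f ts) = insert f (\<Union>t\<in>set ts. syms_trm t)"
| "syms_trm _ = {}"

definition ok :: trm where "ok = Const ''ok''"

inductive root_step :: "trm \<Rightarrow> trm \<Rightarrow> bool" where
  "root_step (Fun Proj1 [Fun Pair [z1, z2]]) z1"
| "root_step (Fun Proj2 [Fun Pair [z1, z2]]) z2"
| "root_step (Fun Dec [Fun Enc [z1, z2, z3], z2]) z1"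
| "root_step (Fun Deca [Fun Enca [z1, Fun Pub [z2], z3], Fun Priv [z2]]) z1"
| "root_step (Fun Check [z1, Fun Sign [z1, Fun Priv [z2]], Fun Pub [z2]]) ok"
| "root_step (Fun Retrieve [Fun Sign [z1, z2]]) z1"

inductive rstep :: "trm \<Rightarrow> trm \<Rightarrow> bool" where
  root: "root_step t u \<Longrightarrow> rstep t u"
| ctxt: "i < length ts \<Longrightarrow> rstep (ts ! i) u \<Longrightarrow> rstep (Fun f ts) (Fun f (ts[i := u]))"

definition normal_form :: "trm \<Rightarrow> bool" where
  "normal_form t \<longleftrightarrow> \<not> (\<exists>u. rstep t u)"

definition eqE :: "trm \<Rightarrow> trm \<Rightarrow> bool" where
  "eqE = (sup rstep rstep\<inverse>\<inverse>)\<^sup>*\<^sup>*"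

fun subterm_at :: "trm \<Rightarrow> nat list \<Rightarrow> trm option" where
  "subterm_at t [] = Some t"
| "subterm_at (Fun f ts) (i # p) =
     (if 1 \<le> i \<and> i \<le> length ts then subterm_at (ts ! (i - 1)) p else None)"
| "subterm_at _ (i # p) = None"

definition head_in :: "trm \<Rightarrow> fsym set \<Rightarrow> bool" where
  "head_in t F \<longleftrightarrow> (\<exists>f ts. t = Fun f ts \<and> f \<in> F)"

fun repl :: "string \<Rightarrow> trm \<Rightarrow> trm \<Rightarrow> trm" where
  "repl s M (Name n) = (if n = s then M else Name n)"
| "repl s M (Fun f ts) = Fun f (map (repl s M) ts)"
| "repl s M t = t"

type_synonym subst = "string \<Rightarrow> trm option"

fun subst_apply :: "subst \<Rightarrow> trm \<Rightarrow> trm" where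
  "subst_apply \<sigma> (Var x) = (case \<sigma> x of Some t \<Rightarrow> t | None \<Rightarrow> Var x)"
| "subst_apply \<sigma> (Fun f ts) = Fun f (map (subst_apply \<sigma>) ts)"
| "subst_apply \<sigma> t = t"

definition subst_dep :: "subst \<Rightarrow> (string \<times> string) set" where
  "subst_dep \<sigma> = {(x, y). x \<in> dom \<sigma> \<and> y \<in> vars_trm (the (\<sigma> x))}"

definition acyclic_subst :: "subst \<Rightarrow> bool" where
  "acyclic_subst \<sigma> \<longleftrightarrow> finite (dom \<sigma>) \<and> acyclic (subst_dep \<sigma>)"

text \<open>Application of an acyclic substitution: applied until no variable of its
  domain remains (card (dom sigma) + 1 rounds suffice).\<close>
definition app :: "trm \<Rightarrow> subst \<Rightarrow> trm" (infixl "\<cdot>" 70) where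
  "t \<cdot> \<sigma> = (subst_apply \<sigma> ^^ (card (dom \<sigma>) + 1)) t"

definition frame_terms :: "subst \<Rightarrow> trm set" where
  "frame_terms \<sigma> = {Var x \<cdot> \<sigma> | x. x \<in> dom \<sigma>}"

definition public :: "string set \<Rightarrow> trm \<Rightarrow> bool" where
  "public ns t \<longleftrightarrow> names_trm t \<inter> ns = {} \<and> Priv \<notin> syms_trm t"

inductive deduce :: "string set \<Rightarrow> subst \<Rightarrow> trm \<Rightarrow> bool" where
  frame: "x \<in> dom \<sigma> \<Longrightarrow> deduce ns \<sigma> (Var x \<cdot> \<sigma>)"
| name: "n \<notin> ns \<Longrightarrow> deduce ns \<sigma> (Name n)"
| const: "deduce ns \<sigma> (Const c)"
| func: "f \<noteq> Priv \<Longrightarrow> length ts = arity f \<Longrightarrow> (\<forall>t\<in>set ts. deduce ns \<sigma> t)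
          \<Longrightarrow> deduce ns \<sigma> (Fun f ts)"
| eq: "deduce ns \<sigma> t \<Longrightarrow> eqE t u \<Longrightarrow> deduce ns \<sigma> u"

definition enc_occ :: "trm \<Rightarrow> nat list \<Rightarrow> bool" where
  "enc_occ U q \<longleftrightarrow> head_in (the (subterm_at U q)) {Enc, Enca} \<and> subterm_at U q \<noteq> None"

definition agent_enc :: "string set \<Rightarrow> trm \<Rightarrow> nat list \<Rightarrow> bool" where
  "agent_enc ms U q \<longleftrightarrow> enc_occ U q \<and> (\<exists>n\<in>ms. subterm_at U (q @ [3]) = Some (Name n))"

definition prob_enc :: "trm set \<Rightarrow> trm \<Rightarrow> nat list \<Rightarrow> bool" where
  "prob_enc S U q \<longleftrightarrow> enc_occ U q \<and>
     (\<forall>V\<in>S. \<forall>p. subterm_at V p = subterm_at U (q @ [3]) \<and> subterm_at V p \<noteq> None \<longrightarrow>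
        (\<exists>q'. p = q' @ [3] \<and> subterm_at V q' = subterm_at U q))"

definition plaintext_above :: "nat list \<Rightarrow> nat list \<Rightarrow> bool" where
  "plaintext_above q qT \<longleftrightarrow> prefix (q @ [1]) qT"

definition ext_wf :: "string set \<Rightarrow> subst \<Rightarrow> string \<Rightarrow> bool" where
  "ext_wf ns \<sigma> s \<longleftrightarrow>
     (\<forall>t\<in>frame_terms \<sigma>. normal_form t)
   \<and> (\<forall>t\<in>frame_terms \<sigma>. \<forall>q. agent_enc ns t q \<longrightarrow> prob_enc (frame_terms \<sigma>) t q)
   \<and> (\<forall>y\<in>dom \<sigma>. \<forall>qs. subterm_at (Var y \<cdot> \<sigma>) qs = Some (Name s) \<longrightarrow>
        (\<exists>q. agent_enc (ns - {s}) (Var y \<cdot> \<sigma>) q \<and> plaintext_above q qs))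
   \<and> (\<forall>y\<in>dom \<sigma>. \<forall>qs q0. subterm_at (Var y \<cdot> \<sigma>) qs = Some (Name s)
        \<and> agent_enc (ns - {s}) (Var y \<cdot> \<sigma>) q0 \<and> plaintext_above q0 qs
        \<and> (\<forall>q'. agent_enc (ns - {s}) (Var y \<cdot> \<sigma>) q' \<and> plaintext_above q' qs \<longrightarrow> prefix q' q0)
        \<longrightarrow> (\<forall>q. strict_prefix q0 q \<and> strict_prefix q qs \<longrightarrow>
               head_in (the (subterm_at (Var y \<cdot> \<sigma>) q)) {Pair, Sign}))"

end

theory Submission
  imports Defs
begin

text \<open>Every occurrence of s in the frame lies below an agent encryption E r whose random
  name r, by probabilistic encryption, occurs in the frame only as the third argument of that
  same E r; public terms mention neither s nor r. Hence in a term U\<sigma>, and in a subterm W of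
  the frame all of whose occurrences of s lie below an encryption, every occurrence of s lies
  strictly below some E r, and r occurs only inside E r. Comparing two such terms top-down
  after replacing s by M, one meets some E r on one side before any replaced occurrence of s.
  The other side then carries Name r at the same position (r differs from s and from the
  public M), which forces it to be E r as well; so the replacement is injective on such terms.\<close>

lemma subterm_at_append:
  "subterm_at t (p @ q) = (case subterm_at t p of None \<Rightarrow> None | Some u \<Rightarrow> subterm_at u q)"
  by (induction t p rule: subterm_at.induct) auto

lemma subterm_at_Fun_Cons_eq_Some:
  "subterm_at (Fun f ts) (j # p) = Some u \<longleftrightarrow>
     (\<exists>i<length ts. j = Suc i \<and> subterm_at (ts ! i) p = Some u)"
  by (cases j) auto

lemma funpow_subst_apply_Fun:
  "(subst_apply \<sigma> ^^ k) (Fun f ts) = Fun f (map (subst_apply \<sigma> ^^ k) ts)"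
  by (induction k) auto

lemma funpow_fixpoint: "f x = x \<Longrightarrow> (f ^^ k) x = x"
  by (induction k) auto

lemma app_Fun: "Fun f ts \<cdot> \<sigma> = Fun f (map (\<lambda>t. t \<cdot> \<sigma>) ts)"
  by (simp add: app_def funpow_subst_apply_Fun)

lemma app_Name: "Name n \<cdot> \<sigma> = Name n"
  by (simp add: app_def funpow_fixpoint)

lemma app_Const: "Const c \<cdot> \<sigma> = Const c"
  by (simp add: app_def funpow_fixpoint)

lemma repl_eq_Name: "repl s M t = Name n \<Longrightarrow> n \<noteq> s \<Longrightarrow> M \<noteq> Name n \<Longrightarrow> t = Name n"
  by (cases t) (auto split: if_splits)

lemma repl_eq_Fun:
  "repl s M t = Fun f us \<Longrightarrow> t \<noteq> Name s \<Longrightarrow> \<exists>ts. t = Fun f ts \<and> us = map (repl s M) ts"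
  by (cases t) (auto split: if_splits)

lemma plaintext_above_strict_prefix: "plaintext_above q qs \<Longrightarrow> strict_prefix q qs"
  unfolding plaintext_above_def by (rule prefix_snocD)

lemma ex_longest_prefix:
  assumes "P q" and "\<And>q. P q \<Longrightarrow> prefix q xs"
  obtains q0 where "P q0" and "\<And>q. P q \<Longrightarrow> prefix q q0"
proof -
  have "\<And>q. P q \<Longrightarrow> length q < Suc (length xs)"
    using assms(2) by (simp add: less_Suc_eq_le prefix_length_le)
  then obtain q0 where q0: "P q0" "\<And>q. P q \<Longrightarrow> length q \<le> length q0"
    using ex_has_greatest_nat[of P q] assms(1) by metis
  then show thesis
    using that assms(2) prefix_length_prefix by blast
qed

section \<open>Shielded occurrences of the secret\<close>

text \<open>R is a set of random names and E r the encryption using r as its randomness. The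
  proper variant of nonces_bound ignores the root, so that it is inherited by every subterm of
  the frame, including a random name itself.\<close>

definition shielded :: "(string \<Rightarrow> trm) \<Rightarrow> string set \<Rightarrow> string \<Rightarrow> trm \<Rightarrow> bool" where
  "shielded E R s T \<longleftrightarrow> (\<forall>qs. subterm_at T qs = Some (Name s) \<longrightarrow>
      (\<exists>q r. strict_prefix q qs \<and> r \<in> R \<and> subterm_at T q = Some (E r)))"

definition nonces_bound :: "(string \<Rightarrow> trm) \<Rightarrow> string set \<Rightarrow> trm \<Rightarrow> bool" where
  "nonces_bound E R T \<longleftrightarrow> (\<forall>p r. r \<in> R \<and> subterm_at T p = Some (Name r) \<longrightarrow>
      (\<exists>q. p = q @ [3] \<and> subterm_at T q = Some (E r)))"

definition proper_nonces_bound :: "(string \<Rightarrow> trm) \<Rightarrow> string set \<Rightarrow> trm \<Rightarrow> bool" where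
  "proper_nonces_bound E R T \<longleftrightarrow> (\<forall>p r. p \<noteq> [] \<and> r \<in> R \<and> subterm_at T p = Some (Name r) \<longrightarrow>
      (\<exists>q. p = q @ [3] \<and> subterm_at T q = Some (E r)))"

lemma not_shielded_Name: "\<not> shielded E R s (Name s)"
  unfolding shielded_def by (auto intro!: exI[of _ "[]"])

lemma shielded_Fun:
  assumes "\<forall>t\<in>set ts. shielded E R s t"
  shows "shielded E R s (Fun f ts)"
  unfolding shielded_def
proof (intro allI impI)
  fix qs assume occ: "subterm_at (Fun f ts) qs = Some (Name s)"
  then obtain i qs' where qs: "qs = Suc i # qs'" "i < length ts"
    and occ': "subterm_at (ts ! i) qs' = Some (Name s)"
    by (cases qs) (auto simp del: subterm_at.simps(2) simp: subterm_at_Fun_Cons_eq_Some)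
  then obtain q r where "strict_prefix q qs'" "r \<in> R" "subterm_at (ts ! i) q = Some (E r)"
    using assms unfolding shielded_def by (meson nth_mem)
  then show "\<exists>q r. strict_prefix q qs \<and> r \<in> R \<and> subterm_at (Fun f ts) q = Some (E r)"
    using qs by (intro exI[of _ "Suc i # q"] exI[of _ r]) auto
qed

lemma nonces_bound_Fun:
  assumes "\<forall>t\<in>set ts. nonces_bound E R t"
  shows "nonces_bound E R (Fun f ts)"
  unfolding nonces_bound_def
proof (intro allI impI)
  fix p r assume "r \<in> R \<and> subterm_at (Fun f ts) p = Some (Name r)"
  then obtain i p' where p: "p = Suc i # p'" "i < length ts" and r: "r \<in> R"
    and occ': "subterm_at (ts ! i) p' = Some (Name r)"
    by (cases p) (auto simp del: subterm_at.simps(2) simp: subterm_at_Fun_Cons_eq_Some)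
  then obtain q where "p' = q @ [3]" "subterm_at (ts ! i) q = Some (E r)"
    using assms unfolding nonces_bound_def by (meson nth_mem)
  then show "\<exists>q. p = q @ [3] \<and> subterm_at (Fun f ts) q = Some (E r)"
    using p by (intro exI[of _ "Suc i # q"]) auto
qed

lemma shielded_nth:
  assumes "shielded E R s (Fun f ts)" and "\<forall>r\<in>R. Fun f ts \<noteq> E r" and "i < length ts"
  shows "shielded E R s (ts ! i)"
  unfolding shielded_def
proof (intro allI impI)
  fix qs assume "subterm_at (ts ! i) qs = Some (Name s)"
  then have "subterm_at (Fun f ts) (Suc i # qs) = Some (Name s)"
    using assms(3) by simp
  then obtain q r where q: "strict_prefix q (Suc i # qs)" "r \<in> R" "subterm_at (Fun f ts) q = Some (E r)"
    using assms(1) unfolding shielded_def by blast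
  moreover have "q \<noteq> []"
    using q assms(2) by auto
  ultimately show "\<exists>q r. strict_prefix q qs \<and> r \<in> R \<and> subterm_at (ts ! i) q = Some (E r)"
    using assms(3) by (cases q) auto
qed

lemma proper_nonces_bound_nth:
  assumes "proper_nonces_bound E R (Fun f ts)" and "\<forall>r\<in>R. Fun f ts \<noteq> E r" and "i < length ts"
  shows "proper_nonces_bound E R (ts ! i)"
  unfolding proper_nonces_bound_def
proof (intro allI impI)
  fix p r assume occ: "p \<noteq> [] \<and> r \<in> R \<and> subterm_at (ts ! i) p = Some (Name r)"
  then have "subterm_at (Fun f ts) (Suc i # p) = Some (Name r)"
    using assms(3) by simp
  then obtain q where q: "Suc i # p = q @ [3]" "subterm_at (Fun f ts) q = Some (E r)"
    using assms(1) occ unfolding proper_nonces_bound_def by blast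
  moreover have "q \<noteq> []"
    using q occ assms(2) by auto
  ultimately show "\<exists>q. p = q @ [3] \<and> subterm_at (ts ! i) q = Some (E r)"
    using assms(3) by (cases q) auto
qed

lemma proper_nonces_bound_subterm:
  assumes "nonces_bound E R t" and "subterm_at t p = Some X"
  shows "proper_nonces_bound E R X"
  unfolding proper_nonces_bound_def
proof (intro allI impI)
  fix p' r assume occ: "p' \<noteq> [] \<and> r \<in> R \<and> subterm_at X p' = Some (Name r)"
  then obtain q where q: "p @ p' = q @ [3]" "subterm_at t q = Some (E r)"
    using assms unfolding nonces_bound_def by (metis option.simps(5) subterm_at_append)
  from occ obtain p0 a where p': "p' = p0 @ [a]"
    by (metis append_butlast_last_id)
  then have "q = p @ p0" "p' = p0 @ [3]"
    using q(1) by auto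
  then show "\<exists>q. p' = q @ [3] \<and> subterm_at X q = Some (E r)"
    using q(2) assms(2) by (auto simp: subterm_at_append)
qed

lemma shielded_app:
  assumes "\<forall>x\<in>dom \<sigma>. shielded E R s (Var x \<cdot> \<sigma>)"
  shows "vars_trm U \<subseteq> dom \<sigma> \<Longrightarrow> s \<notin> names_trm U \<Longrightarrow> shielded E R s (U \<cdot> \<sigma>)"
proof (induction U)
  case (Fun f ts)
  have "shielded E R s (t \<cdot> \<sigma>)" if "t \<in> set ts" for t
    using Fun.IH[OF that] Fun.prems that by auto
  then show ?case
    by (simp add: app_Fun shielded_Fun)
qed (use assms in \<open>auto simp: app_Name app_Const shielded_def elim: subterm_at.elims\<close>)

lemma nonces_bound_app:
  assumes "\<forall>x\<in>dom \<sigma>. nonces_bound E R (Var x \<cdot> \<sigma>)"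
  shows "vars_trm U \<subseteq> dom \<sigma> \<Longrightarrow> names_trm U \<inter> R = {} \<Longrightarrow> nonces_bound E R (U \<cdot> \<sigma>)"
proof (induction U)
  case (Fun f ts)
  have "nonces_bound E R (t \<cdot> \<sigma>)" if "t \<in> set ts" for t
    using Fun.IH[OF that] Fun.prems that by auto
  then show ?case
    by (simp add: app_Fun nonces_bound_Fun)
qed (use assms in \<open>auto simp: app_Name app_Const nonces_bound_def elim: subterm_at.elims\<close>)

lemma repl_inj_on_shielded:
  assumes E_rand: "\<forall>r\<in>R. subterm_at (E r) [3] = Some (Name r)"
    and "s \<notin> R" and "\<forall>r\<in>R. M \<noteq> Name r"
  shows "shielded E R s T \<Longrightarrow> proper_nonces_bound E R T \<Longrightarrow>
    shielded E R s T' \<Longrightarrow> proper_nonces_bound E R T' \<Longrightarrow>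
    repl s M T = repl s M T' \<Longrightarrow> T = T'"
proof (induction T arbitrary: T')
  case (Var x)
  then show ?case
    using not_shielded_Name by (cases T') (auto split: if_splits)
next
  case (Name n)
  then show ?case
    using not_shielded_Name by (cases T') (auto split: if_splits)
next
  case (Const c)
  then show ?case
    using not_shielded_Name by (cases T') (auto split: if_splits)
next
  case (Fun f ts)
  have "T' \<noteq> Name s" "repl s M T' = Fun f (map (repl s M) ts)"
    using Fun.prems(3,5) not_shielded_Name by auto
  then obtain ts' where T': "T' = Fun f ts'" and eqs: "map (repl s M) ts = map (repl s M) ts'"
    using repl_eq_Fun by blast
  have len: "length ts' = length ts"
    using eqs map_eq_imp_length_eq by metis
  have enc_eq: "Fun f xs = E r"
    if r: "r \<in> R" and E_r: "E r = Fun f ys" and xs: "proper_nonces_bound E R (Fun f xs)"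
      and ys_xs: "map (repl s M) ys = map (repl s M) xs" for r xs ys
  proof -
    have ys: "2 < length ys" "ys ! 2 = Name r"
      using E_rand r E_r by (auto split: if_splits)
    have len_xs: "length xs = length ys"
      using ys_xs map_eq_imp_length_eq by metis
    have "repl s M (xs ! 2) = repl s M (ys ! 2)"
      using ys(1) len_xs ys_xs by (metis nth_map)
    also have "\<dots> = Name r"
      using ys(2) r \<open>s \<notin> R\<close> by auto
    finally have "xs ! 2 = Name r"
      using repl_eq_Name r \<open>s \<notin> R\<close> \<open>\<forall>r\<in>R. M \<noteq> Name r\<close> by blast
    then have "subterm_at (Fun f xs) [3] = Some (Name r)"
      using ys(1) len_xs by simp
    then obtain q where "[3] = q @ [3]" "subterm_at (Fun f xs) q = Some (E r)"
      using r xs unfolding proper_nonces_bound_def by blast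
    then show ?thesis
      by simp
  qed
  show ?case
  proof (cases "\<exists>r\<in>R. Fun f ts = E r \<or> T' = E r")
    case True
    then obtain r where "r \<in> R" "Fun f ts = E r \<or> T' = E r"
      by blast
    then show ?thesis
      using enc_eq[of r ts' ts] enc_eq[of r ts ts'] Fun.prems(2,4) eqs T' by auto
  next
    case False
    have "ts ! i = ts' ! i" if "i < length ts" for i
    proof (rule Fun.IH)
      show "ts ! i \<in> set ts" "shielded E R s (ts ! i)" "proper_nonces_bound E R (ts ! i)"
        using that False Fun.prems(1,2) shielded_nth proper_nonces_bound_nth by auto
      show "shielded E R s (ts' ! i)" "proper_nonces_bound E R (ts' ! i)"
        using that False Fun.prems(3,4) T' len shielded_nth proper_nonces_bound_nth by auto
      show "repl s M (ts ! i) = repl s M (ts' ! i)"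
        using that len eqs by (metis nth_map)
    qed
    then show ?thesis
      using T' len by (simp add: list_eq_iff_nth_eq)
  qed
qed

section \<open>Nonces of an extended well-formed frame\<close>

locale ext_wf_frame =
  fixes ns :: "string set" and \<sigma> :: subst and s :: string
  assumes ext_wf: "ext_wf ns \<sigma> s"
begin

lemma frame_terms_prob_enc:
  "t \<in> frame_terms \<sigma> \<Longrightarrow> agent_enc ns t q \<Longrightarrow> prob_enc (frame_terms \<sigma>) t q"
  using ext_wf unfolding ext_wf_def by blast

lemma frame_terms_agent_enc_above:
  assumes "t \<in> frame_terms \<sigma>" and "subterm_at t qs = Some (Name s)"
  shows "\<exists>q. agent_enc (ns - {s}) t q \<and> plaintext_above q qs"
  using assms ext_wf unfolding ext_wf_def frame_terms_def by blast

lemma frame_terms_lowest_agent_enc_heads: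
  assumes "t \<in> frame_terms \<sigma>" and "subterm_at t qs = Some (Name s)"
    and "agent_enc (ns - {s}) t q0" and "plaintext_above q0 qs"
    and "\<And>q. agent_enc (ns - {s}) t q \<Longrightarrow> plaintext_above q qs \<Longrightarrow> prefix q q0"
    and "strict_prefix q0 q" and "strict_prefix q qs"
  shows "head_in (the (subterm_at t q)) {Pair, Sign}"
proof -
  obtain y where "y \<in> dom \<sigma>" "t = Var y \<cdot> \<sigma>"
    using assms(1) unfolding frame_terms_def by blast
  with ext_wf have "\<forall>qs q0. subterm_at t qs = Some (Name s)
        \<and> agent_enc (ns - {s}) t q0 \<and> plaintext_above q0 qs
        \<and> (\<forall>q'. agent_enc (ns - {s}) t q' \<and> plaintext_above q' qs \<longrightarrow> prefix q' q0)
        \<longrightarrow> (\<forall>q. strict_prefix q0 q \<and> strict_prefix q qs \<longrightarrow>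
               head_in (the (subterm_at t q)) {Pair, Sign})"
    unfolding ext_wf_def by blast
  then show ?thesis
    using assms(2-) by blast
qed

definition nonces :: "string set" where
  "nonces = {r \<in> ns - {s}. \<exists>t\<in>frame_terms \<sigma>. \<exists>q.
     agent_enc (ns - {s}) t q \<and> subterm_at t (q @ [3]) = Some (Name r)}"

definition nonce_enc :: "string \<Rightarrow> trm" where
  "nonce_enc r = (SOME e. \<exists>t\<in>frame_terms \<sigma>. \<exists>q. agent_enc (ns - {s}) t q \<and>
     subterm_at t (q @ [3]) = Some (Name r) \<and> subterm_at t q = Some e)"

lemma nonces_subset: "nonces \<subseteq> ns - {s}"
  unfolding nonces_def by blast

lemma nonce_enc_occurs:
  assumes "r \<in> nonces"
  obtains t q where "t \<in> frame_terms \<sigma>" "agent_enc (ns - {s}) t q"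
    "subterm_at t (q @ [3]) = Some (Name r)" "subterm_at t q = Some (nonce_enc r)"
proof -
  obtain t q where tq: "t \<in> frame_terms \<sigma>" "agent_enc (ns - {s}) t q"
    "subterm_at t (q @ [3]) = Some (Name r)"
    using assms unfolding nonces_def by blast
  then obtain e where "subterm_at t q = Some e"
    unfolding agent_enc_def enc_occ_def by blast
  with tq have "\<exists>e. \<exists>t\<in>frame_terms \<sigma>. \<exists>q. agent_enc (ns - {s}) t q \<and>
      subterm_at t (q @ [3]) = Some (Name r) \<and> subterm_at t q = Some e"
    by blast
  from someI_ex[OF this] show thesis
    using that unfolding nonce_enc_def by blast
qed

lemma subterm_at_nonce_enc: "r \<in> nonces \<Longrightarrow> subterm_at (nonce_enc r) [3] = Some (Name r)"
  by (erule nonce_enc_occurs) (simp add: subterm_at_append)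

lemma frame_nonces_bound:
  assumes "t \<in> frame_terms \<sigma>"
  shows "nonces_bound nonce_enc nonces t"
  unfolding nonces_bound_def
proof (intro allI impI)
  fix p r assume occ: "r \<in> nonces \<and> subterm_at t p = Some (Name r)"
  then obtain t' q where t': "t' \<in> frame_terms \<sigma>" "agent_enc (ns - {s}) t' q"
    "subterm_at t' (q @ [3]) = Some (Name r)" "subterm_at t' q = Some (nonce_enc r)"
    using nonce_enc_occurs by blast
  have "agent_enc ns t' q"
    using t'(2) unfolding agent_enc_def by blast
  then have "prob_enc (frame_terms \<sigma>) t' q"
    using t'(1) frame_terms_prob_enc by blast
  then show "\<exists>q. p = q @ [3] \<and> subterm_at t q = Some (nonce_enc r)"
    using assms occ t'(3,4) unfolding prob_enc_def by fastforce
qed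

lemma agent_enc_eq_nonce_enc:
  assumes "t \<in> frame_terms \<sigma>" and "agent_enc (ns - {s}) t q"
  shows "\<exists>r\<in>nonces. subterm_at t q = Some (nonce_enc r)"
proof -
  obtain r where r: "r \<in> ns - {s}" "subterm_at t (q @ [3]) = Some (Name r)"
    using assms(2) unfolding agent_enc_def by blast
  then have "r \<in> nonces"
    unfolding nonces_def using assms by blast
  with frame_nonces_bound[OF assms(1)] r(2) show ?thesis
    unfolding nonces_bound_def by blast
qed

lemma lowest_agent_enc_above:
  assumes t: "t \<in> frame_terms \<sigma>" and occ: "subterm_at t qs = Some (Name s)"
  obtains q0 where "agent_enc (ns - {s}) t q0" and "plaintext_above q0 qs"
    and "\<And>q. strict_prefix q0 q \<Longrightarrow> strict_prefix q qs \<Longrightarrow> head_in (the (subterm_at t q)) {Pair, Sign}"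
proof -
  define P where "P q \<longleftrightarrow> agent_enc (ns - {s}) t q \<and> plaintext_above q qs" for q
  obtain q where "P q"
    using frame_terms_agent_enc_above[OF t occ] unfolding P_def by blast
  moreover have "prefix q qs" if "P q" for q
    using that unfolding P_def by (meson prefix_order.less_imp_le plaintext_above_strict_prefix)
  ultimately obtain q0 where q0: "P q0" and longest: "\<And>q. P q \<Longrightarrow> prefix q q0"
    using ex_longest_prefix[of P] by metis
  show thesis
  proof (rule that)
    show "agent_enc (ns - {s}) t q0" "plaintext_above q0 qs"
      using q0 unfolding P_def by auto
    show "head_in (the (subterm_at t q)) {Pair, Sign}"
      if "strict_prefix q0 q" "strict_prefix q qs" for q
      using frame_terms_lowest_agent_enc_heads[OF t occ _ _ _ that] q0 longest
      unfolding P_def by blast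
  qed
qed

lemma frame_shielded:
  assumes "t \<in> frame_terms \<sigma>"
  shows "shielded nonce_enc nonces s t"
  unfolding shielded_def
proof (intro allI impI)
  fix qs assume "subterm_at t qs = Some (Name s)"
  then obtain q where q: "agent_enc (ns - {s}) t q" "plaintext_above q qs"
    using frame_terms_agent_enc_above[OF assms] by blast
  then obtain r where "r \<in> nonces" "subterm_at t q = Some (nonce_enc r)"
    using agent_enc_eq_nonce_enc[OF assms] by blast
  moreover have "strict_prefix q qs"
    using q(2) by (rule plaintext_above_strict_prefix)
  ultimately show "\<exists>q r. strict_prefix q qs \<and> r \<in> nonces \<and> subterm_at t q = Some (nonce_enc r)"
    by blast
qed

text \<open>The encryption above s inside X cannot lie strictly between the lowest agent
  encryption above s and s itself, where only pairs and signatures occur; so that agent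
  encryption lies inside X.\<close>

lemma shielded_subterm:
  assumes t: "t \<in> frame_terms \<sigma>" and X: "subterm_at t p = Some X"
    and enc_above: "\<And>qs. subterm_at X qs = Some (Name s) \<Longrightarrow> \<exists>qe. enc_occ X qe \<and> strict_prefix qe qs"
  shows "shielded nonce_enc nonces s X"
  unfolding shielded_def
proof (intro allI impI)
  fix qs assume occ: "subterm_at X qs = Some (Name s)"
  then have occ_t: "subterm_at t (p @ qs) = Some (Name s)"
    using X by (simp add: subterm_at_append)
  obtain q0 where q0: "agent_enc (ns - {s}) t q0" "plaintext_above q0 (p @ qs)"
    and between: "\<And>q. strict_prefix q0 q \<Longrightarrow> strict_prefix q (p @ qs) \<Longrightarrow>
      head_in (the (subterm_at t q)) {Pair, Sign}"
    using lowest_agent_enc_above[OF t occ_t] by blast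
  obtain qe where qe: "enc_occ X qe" "strict_prefix qe qs"
    using enc_above occ by blast
  have "head_in (the (subterm_at t (p @ qe))) {Enc, Enca}"
    using qe(1) X unfolding enc_occ_def by (simp add: subterm_at_append)
  then have "\<not> strict_prefix q0 (p @ qe)"
    using between qe(2) unfolding head_in_def by (fastforce simp: strict_prefix_def)
  moreover have "prefix q0 (p @ qs)" "prefix (p @ qe) (p @ qs)"
    using plaintext_above_strict_prefix[OF q0(2)] qe(2) by auto
  ultimately have "prefix (p @ qe) q0"
    using prefix_same_cases prefix_order.le_neq_trans by blast
  then obtain z where z: "q0 = p @ qe @ z"
    by (auto simp: prefix_def)
  obtain r where "r \<in> nonces" "subterm_at t q0 = Some (nonce_enc r)"
    using agent_enc_eq_nonce_enc[OF t q0(1)] by blast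
  moreover have "subterm_at X (qe @ z) = subterm_at t q0"
    using X z by (simp add: subterm_at_append)
  moreover have "strict_prefix (qe @ z) qs"
    using plaintext_above_strict_prefix[OF q0(2)] z by (simp add: strict_prefix_def)
  ultimately show "\<exists>q r. strict_prefix q qs \<and> r \<in> nonces \<and> subterm_at X q = Some (nonce_enc r)"
    by auto
qed

end

theorem corollary2p14:
  fixes ns :: "string set" and \<sigma> :: subst and s :: string
    and U V M W W' :: trm
  assumes frame: "finite ns" "acyclic_subst \<sigma>" "\<forall>t\<in>frame_terms \<sigma>. wf_trm t"
    and s_in: "s \<in> ns"
    and ewf: "ext_wf ns \<sigma> s"
    and not_ded: "\<not> deduce ns \<sigma> (Name s)"
    and U: "wf_trm U" "public ns U" "vars_trm U \<subseteq> dom \<sigma>"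
    and V: "wf_trm V" "public ns V" "vars_trm V \<subseteq> dom \<sigma>"
    and M: "wf_trm M" "public ns M" "vars_trm M = {}"
    and W_sub: "\<exists>t\<in>frame_terms \<sigma>. \<exists>p. subterm_at t p = Some W"
    and W'_sub: "\<exists>t\<in>frame_terms \<sigma>. \<exists>p. subterm_at t p = Some W'"
    and W_enc: "\<forall>qs. subterm_at W qs = Some (Name s) \<longrightarrow>
                  (\<exists>qe. enc_occ W qe \<and> strict_prefix qe qs)"
    and W'_enc: "\<forall>qs. subterm_at W' qs = Some (Name s) \<longrightarrow>
                  (\<exists>qe. enc_occ W' qe \<and> strict_prefix qe qs)"
  shows "(repl s M (U \<cdot> \<sigma>) = repl s M (V \<cdot> \<sigma>) \<longrightarrow> U \<cdot> \<sigma> = V \<cdot> \<sigma>)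
       \<and> (repl s M (U \<cdot> \<sigma>) = repl s M W \<longrightarrow> U \<cdot> \<sigma> = W)
       \<and> (repl s M W = repl s M W' \<longrightarrow> W = W')"
proof -
  interpret ext_wf_frame ns \<sigma> s
    using ewf by unfold_locales
  let ?good = "\<lambda>T. shielded nonce_enc nonces s T \<and> proper_nonces_bound nonce_enc nonces T"
  have "\<forall>r\<in>nonces. M \<noteq> Name r"
    using M(2) nonces_subset unfolding public_def by auto
  then have inj: "?good T \<Longrightarrow> ?good T' \<Longrightarrow> repl s M T = repl s M T' \<Longrightarrow> T = T'" for T T'
    using repl_inj_on_shielded subterm_at_nonce_enc nonces_subset by blast
  have frame_vars: "Var x \<cdot> \<sigma> \<in> frame_terms \<sigma>" if "x \<in> dom \<sigma>" for x
    using that unfolding frame_terms_def by blast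
  have good_app: "?good (X \<cdot> \<sigma>)" if "public ns X" "vars_trm X \<subseteq> dom \<sigma>" for X
  proof -
    have "s \<notin> names_trm X" "names_trm X \<inter> nonces = {}"
      using that(1) s_in nonces_subset unfolding public_def by auto
    then show ?thesis
      using that(2) frame_vars frame_shielded frame_nonces_bound shielded_app nonces_bound_app
        proper_nonces_bound_subterm[of _ _ "X \<cdot> \<sigma>" "[]"] by simp
  qed
  have good_sub: "?good X" if "\<exists>t\<in>frame_terms \<sigma>. \<exists>p. subterm_at t p = Some X"
    and "\<forall>qs. subterm_at X qs = Some (Name s) \<longrightarrow> (\<exists>qe. enc_occ X qe \<and> strict_prefix qe qs)" for X
    using that shielded_subterm frame_nonces_bound proper_nonces_bound_subterm by blast
  show ?thesis
    using inj good_app[OF U(2,3)] good_app[OF V(2,3)] good_sub[OF W_sub W_enc] good_sub[OF W'_sub W'_enc]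
    by blast
qed

end
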